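(* Let $R$, $G$, $*$, $\sigma$ and $\mathcal{S}$ be as in the context, and suppose $\mathcal{S}$ is anticommutative. Let $x,y\in G\setminus G_*$ with $\sigma(y)\neq -1$. Then one of the following holds: - (i) $xy=yx=x^*y^*=y^*x^*$ and $2(1+\sigma(xy))=0=2(\sigma(x)+\sigma(y))$; - (ii) $xy=yx^*=y^*x=x^*y^*$ and $1+\sigma(x)+\sigma(y)+\sigma(xy)=0$; - (iii) $xy=x^*y^*\neq yx^*=y^*x$, $\sigma(xy)=-1$ and $\sigma(x)=-\sigma(y)$; - (iv) $xy=yx^*\neq x^*y^*=y^*x$ and $\sigma(x)=-1$.
   Context: Throughout, $R$ is a commutative ring with unity with $\operatorname{char}(R)\neq 2$, and $\mathcal{U}(R)$ is its unit group. $G$ is a group with an involution $*$, i.e. a map $x\mapsto x^*$ with $(xy)^*=y^*x^*$ and $(x^* )^*=x$. The map $\sigma:G\to\mathcal{U}(R)$ is a nontrivial group homomorphism with kernel $N=\ker\sigma$, and it is compatible with $*$: $xx^*\in N$ for all $x\in G$. The group ring $RG$ carries the involution $\left(\sum_{x\in G}\alpha_x x\right)^{\sigma*}=\sum_{x\in G}\sigma(x)\alpha_x x^*$. Write $G_*=\{x\in G: x^*=x\}$ and $N_*=G_*\cap N$. Let $\mathcal{S}$ be the $R$-submodule of $RG$ spanned by the union of the following three sets: - $2\mathcal{S}_1=\{2x: x\in N_*\}$; - $\mathcal{S}_2=\{\alpha x: x\in G_*\setminus N,\ \alpha\in R,\ \alpha(1-\sigma(x))=0\}$; - $\mathcal{S}_3=\{x+\sigma(x)x^*: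 x\in G\setminus G_*\}$. $\mathcal{S}$ is called anticommutative if $ab+ba=0$ for all $a,b\in\mathcal{S}$. *)

theory Defs
  imports "HOL-Algebra.Group"
begin

text \<open>Group ring RG: elements are functions 'g => 'r with finite support
contained in carrier G. Basis element of x, sum, scalar multiplication,
and convolution product.\<close>

definition gr_supp :: "('g \<Rightarrow> 'r::zero) \<Rightarrow> 'g set" where
  "gr_supp a = {g. a g \<noteq> 0}"

definition gr_basis :: "'g \<Rightarrow> 'g \<Rightarrow> 'r::{zero,one}" where
  "gr_basis x = (\<lambda>g. if g = x then 1 else 0)"

definition gr_mult :: "('g, 'b) monoid_scheme \<Rightarrow> ('g \<Rightarrow> 'r::comm_ring_1) \<Rightarrow> ('g \<Rightarrow> 'r) \<Rightarrow> ('g \<Rightarrow> 'r)" where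
  "gr_mult G a b = (\<lambda>g. \<Sum>p \<in> {(h, k). h \<in> gr_supp a \<and> k \<in> gr_supp b \<and> h \<otimes>\<^bsub>G\<^esub> k = g}.
      a (fst p) * b (snd p))"

definition group_involution :: "('g, 'b) monoid_scheme \<Rightarrow> ('g \<Rightarrow> 'g) \<Rightarrow> bool" where
  "group_involution G star \<longleftrightarrow>
     (\<forall>x \<in> carrier G. star x \<in> carrier G) \<and>
     (\<forall>x \<in> carrier G. \<forall>y \<in> carrier G. star (x \<otimes>\<^bsub>G\<^esub> y) = star y \<otimes>\<^bsub>G\<^esub> star x) \<and>
     (\<forall>x \<in> carrier G. star (star x) = x)"

definition unit_hom :: "('g, 'b) monoid_scheme \<Rightarrow> ('g \<Rightarrow> 'r::comm_ring_1) \<Rightarrow> bool" where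
  "unit_hom G \<sigma> \<longleftrightarrow>
     (\<forall>x \<in> carrier G. \<sigma> x dvd 1) \<and>
     (\<forall>x \<in> carrier G. \<forall>y \<in> carrier G. \<sigma> (x \<otimes>\<^bsub>G\<^esub> y) = \<sigma> x * \<sigma> y)"

definition sym_elts :: "('g, 'b) monoid_scheme \<Rightarrow> ('g \<Rightarrow> 'g) \<Rightarrow> 'g set" where
  "sym_elts G star = {x \<in> carrier G. star x = x}"

definition kern :: "('g, 'b) monoid_scheme \<Rightarrow> ('g \<Rightarrow> 'r::one) \<Rightarrow> 'g set" where
  "kern G \<sigma> = {x \<in> carrier G. \<sigma> x = 1}"

definition S_gens :: "('g, 'b) monoid_scheme \<Rightarrow> ('g \<Rightarrow> 'g) \<Rightarrow> ('g \<Rightarrow> 'r::comm_ring_1) \<Rightarrow> ('g \<Rightarrow> 'r) set" where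
  "S_gens G star \<sigma> =
     {(\<lambda>g. 2 * gr_basis x g) | x. x \<in> sym_elts G star \<inter> kern G \<sigma>}
   \<union> {(\<lambda>g. \<alpha> * gr_basis x g) | x \<alpha>. x \<in> sym_elts G star - kern G \<sigma> \<and> \<alpha> * (1 - \<sigma> x) = 0}
   \<union> {(\<lambda>g. gr_basis x g + \<sigma> x * gr_basis (star x) g) | x. x \<in> carrier G - sym_elts G star}"

inductive_set gr_span :: "('g \<Rightarrow> 'r::comm_ring_1) set \<Rightarrow> ('g \<Rightarrow> 'r) set" for A where
  zero: "(\<lambda>g. 0) \<in> gr_span A"
| gen: "a \<in> A \<Longrightarrow> a \<in> gr_span A"
| add: "a \<in> gr_span A \<Longrightarrow> b \<in> gr_span A \<Longrightarrow> (\<lambda>g. a g + b g) \<in> gr_span A"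
| smult: "a \<in> gr_span A \<Longrightarrow> (\<lambda>g. r * a g) \<in> gr_span A"

definition S_set :: "('g, 'b) monoid_scheme \<Rightarrow> ('g \<Rightarrow> 'g) \<Rightarrow> ('g \<Rightarrow> 'r::comm_ring_1) \<Rightarrow> ('g \<Rightarrow> 'r) set" where
  "S_set G star \<sigma> = gr_span (S_gens G star \<sigma>)"

definition anticommutative :: "('g, 'b) monoid_scheme \<Rightarrow> ('g \<Rightarrow> 'r::comm_ring_1) set \<Rightarrow> bool" where
  "anticommutative G S \<longleftrightarrow>
     (\<forall>a \<in> S. \<forall>b \<in> S. (\<lambda>g. gr_mult G a b g + gr_mult G b a g) = (\<lambda>g. 0))"

end

theory Submission
  imports Defs
begin

text \<open>
  For non-symmetric \<open>x\<close>, \<open>y\<close> the elements \<open>x + \<sigma>(x)x\<^sup>*\<close> and \<open>y + \<sigma>(y)y\<^sup>*\<close> of \<open>S\<close>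
  anticommute, so the eight products \<open>xy, xy\<^sup>*, x\<^sup>*y, x\<^sup>*y\<^sup>*, yx, yx\<^sup>*, y\<^sup>*x, y\<^sup>*x\<^sup>*\<close>,
  weighted by the units \<open>1, \<sigma>(y), \<sigma>(x), \<sigma>(x)\<sigma>(y), 1, \<sigma>(x), \<sigma>(y), \<sigma>(x)\<sigma>(y)\<close>, cancel
  in \<open>RG\<close>: the weights of equal products sum to zero. Anticommutation of \<open>2\<close> with
  \<open>x + \<sigma>(x)x\<^sup>*\<close> gives \<open>4 = 0\<close>, while \<open>2u \<noteq> 0\<close> for units \<open>u\<close>; so no product stands
  alone and two equal weights never cancel each other. The involution maps coincidences
  among the products to coincidences, and anticommutation of \<open>x + \<sigma>(x)x\<^sup>*\<close> with \<open>2z\<close>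
  for the symmetric products \<open>z\<close> that arise excludes the remaining configurations. A
  case analysis on which products equal \<open>xy\<close> leaves exactly the four cases.
\<close>

lemma gr_mult_eq_double_sum:
  assumes "finite U" "finite V" "\<And>h. a h \<noteq> 0 \<Longrightarrow> h \<in> U" "\<And>k. b k \<noteq> 0 \<Longrightarrow> k \<in> V"
  shows "gr_mult G a b g = (\<Sum>h\<in>U. \<Sum>k\<in>V. if h \<otimes>\<^bsub>G\<^esub> k = g then a h * b k else 0)"
proof -
  let ?P = "{(h, k). h \<in> gr_supp a \<and> k \<in> gr_supp b \<and> h \<otimes>\<^bsub>G\<^esub> k = g}"
  have "?P \<subseteq> U \<times> V" using assms(3,4) by (auto simp: gr_supp_def)
  then have "gr_mult G a b g
      = (\<Sum>p\<in>U \<times> V. if fst p \<otimes>\<^bsub>G\<^esub> snd p = g then a (fst p) * b (snd p) else 0)"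
    unfolding gr_mult_def
    by (intro sum.mono_neutral_cong_left) (use assms in \<open>auto simp: gr_supp_def\<close>)
  then show ?thesis by (simp add: sum.cartesian_product split_def)
qed

lemma gr_mult_binomials:
  fixes c d :: "'r::comm_ring_1"
  assumes "x \<noteq> x'" "y \<noteq> y'"
  shows "gr_mult G (\<lambda>g. gr_basis x g + c * gr_basis x' g) (\<lambda>g. gr_basis y g + d * gr_basis y' g) g
   = (if x \<otimes>\<^bsub>G\<^esub> y = g then 1 else 0) + (if x \<otimes>\<^bsub>G\<^esub> y' = g then d else 0)
     + (if x' \<otimes>\<^bsub>G\<^esub> y = g then c else 0) + (if x' \<otimes>\<^bsub>G\<^esub> y' = g then c * d else 0)"
  by (subst gr_mult_eq_double_sum[where U = "{x, x'}" and V = "{y, y'}"])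
    (use assms in \<open>auto simp: gr_basis_def add.assoc split: if_splits\<close>)

lemma gr_mult_monomial_binomial:
  fixes \<alpha> d :: "'r::comm_ring_1"
  assumes "y \<noteq> y'"
  shows "gr_mult G (\<lambda>g. \<alpha> * gr_basis z g) (\<lambda>g. gr_basis y g + d * gr_basis y' g) g
   = (if z \<otimes>\<^bsub>G\<^esub> y = g then \<alpha> else 0) + (if z \<otimes>\<^bsub>G\<^esub> y' = g then \<alpha> * d else 0)"
  by (subst gr_mult_eq_double_sum[where U = "{z}" and V = "{y, y'}"])
    (use assms in \<open>auto simp: gr_basis_def split: if_splits\<close>)

lemma gr_mult_binomial_monomial:
  fixes \<alpha> d :: "'r::comm_ring_1"
  assumes "y \<noteq> y'"
  shows "gr_mult G (\<lambda>g. gr_basis y g + d * gr_basis y' g) (\<lambda>g. \<alpha> * gr_basis z g) g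
   = (if y \<otimes>\<^bsub>G\<^esub> z = g then \<alpha> else 0) + (if y' \<otimes>\<^bsub>G\<^esub> z = g then d * \<alpha> else 0)"
  by (subst gr_mult_eq_double_sum[where U = "{y, y'}" and V = "{z}"])
    (use assms in \<open>auto simp: gr_basis_def split: if_splits\<close>)

lemma star_pair_in_S_set:
  assumes "x \<in> carrier G - sym_elts G star"
  shows "(\<lambda>g. gr_basis x g + \<sigma> x * gr_basis (star x) g) \<in> S_set G star \<sigma>"
  unfolding S_set_def by (rule gr_span.gen) (use assms in \<open>auto simp: S_gens_def\<close>)

lemma double_basis_in_S_set:
  fixes \<sigma> :: "'g \<Rightarrow> 'r::comm_ring_1"
  assumes "z \<in> carrier G" "star z = z" "2 * (1 - \<sigma> z) = 0"
  shows "(\<lambda>g. 2 * gr_basis z g) \<in> S_set G star \<sigma>"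
  unfolding S_set_def
proof (rule gr_span.gen)
  have "z \<in> sym_elts G star \<inter> kern G \<sigma> \<or> z \<in> sym_elts G star - kern G \<sigma>"
    using assms(1,2) by (auto simp: sym_elts_def kern_def)
  then show "(\<lambda>g. 2 * gr_basis z g) \<in> S_gens G star \<sigma>"
    using assms(3) unfolding S_gens_def by blast
qed

lemma anticommutativeD:
  assumes "anticommutative G S" "a \<in> S" "b \<in> S"
  shows "gr_mult G a b g + gr_mult G b a g = 0"
  using assms unfolding anticommutative_def by metis

locale anticommutative_S = group G for G :: "('a, 'b) monoid_scheme" (structure) +
  fixes star :: "'a \<Rightarrow> 'a" and \<sigma> :: "'a \<Rightarrow> 'r::comm_ring_1"
  assumes involution: "group_involution G star"
    and sigma_hom: "unit_hom G \<sigma>"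
    and sigma_mult_star: "\<forall>z \<in> carrier G. \<sigma> (z \<otimes> star z) = 1"
    and char_neq_2: "CHAR('r) \<noteq> 2"
    and S_anticommutative: "anticommutative G (S_set G star \<sigma>)"
begin

abbreviation star_pair :: "'a \<Rightarrow> 'a \<Rightarrow> 'r" where
  "star_pair w \<equiv> \<lambda>g. gr_basis w g + \<sigma> w * gr_basis (star w) g"

abbreviation double_basis :: "'a \<Rightarrow> 'a \<Rightarrow> 'r" where
  "double_basis z \<equiv> \<lambda>g. 2 * gr_basis z g"

lemma star_closed [simp]: "a \<in> carrier G \<Longrightarrow> star a \<in> carrier G"
  and star_mult [simp]: "a \<in> carrier G \<Longrightarrow> b \<in> carrier G \<Longrightarrow> star (a \<otimes> b) = star b \<otimes> star a"
  and star_star [simp]: "a \<in> carrier G \<Longrightarrow> star (star a) = a"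
  using involution by (auto simp: group_involution_def)

lemma star_eq_iff: "a \<in> carrier G \<Longrightarrow> b \<in> carrier G \<Longrightarrow> star a = star b \<longleftrightarrow> a = b"
  by (metis star_star)

lemma star_one [simp]: "star \<one> = \<one>"
  using star_mult[of \<one> \<one>] by simp

lemma sigma_unit: "a \<in> carrier G \<Longrightarrow> \<sigma> a dvd 1"
  and sigma_mult [simp]: "a \<in> carrier G \<Longrightarrow> b \<in> carrier G \<Longrightarrow> \<sigma> (a \<otimes> b) = \<sigma> a * \<sigma> b"
  using sigma_hom by (auto simp: unit_hom_def)

lemma sigma_one: "\<sigma> \<one> = 1"
  using sigma_mult_star[rule_format, of \<one>] by simp

lemma sigma_star: "a \<in> carrier G \<Longrightarrow> \<sigma> a * \<sigma> (star a) = 1"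
  using sigma_mult_star[rule_format, of a] by simp

lemma two_neq_zero: "(2::'r) \<noteq> 0"
proof
  assume "(2::'r) = 0"
  then have "CHAR('r) dvd 2"
    by (metis of_nat_eq_0_iff_char_dvd of_nat_numeral)
  then have "CHAR('r) \<in> {1, 2}"
    using dvd_imp_le[of "CHAR('r)" 2] by (cases "CHAR('r)") auto
  with char_neq_2 show False by simp
qed

lemma double_unit_neq_zero:
  assumes "(u::'r) dvd 1" shows "2 * u \<noteq> 0"
proof
  assume "2 * u = 0"
  obtain k where "1 = u * k" using assms by (auto elim: dvdE)
  then have "(2::'r) = 2 * u * k" by (simp add: mult.assoc)
  with \<open>2 * u = 0\<close> two_neq_zero show False by simp
qed

lemma four_eq_zero:
  assumes w: "w \<in> carrier G - sym_elts G star"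
  shows "(4::'r) = 0"
proof -
  have "star w \<noteq> w" using w by (auto simp: sym_elts_def)
  moreover have "gr_mult G (double_basis \<one>) (star_pair w) w
    + gr_mult G (star_pair w) (double_basis \<one>) w = 0"
    by (intro anticommutativeD[OF S_anticommutative] double_basis_in_S_set star_pair_in_S_set w)
      (auto simp: sigma_one)
  ultimately have "(2::'r) + 2 = 0"
    using w by (simp add: gr_mult_monomial_binomial gr_mult_binomial_monomial)
  then show ?thesis by simp
qed

lemma nonsymmetric_commutes_with_star:
  assumes w: "w \<in> carrier G - sym_elts G star"
  shows "w \<otimes> star w = star w \<otimes> w"
proof (rule ccontr)
  assume nc: "w \<otimes> star w \<noteq> star w \<otimes> w"
  have wc: "w \<in> carrier G" and wn: "w \<noteq> star w" using w by (auto simp: sym_elts_def)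
  have "gr_mult G (star_pair w) (star_pair w) g + gr_mult G (star_pair w) (star_pair w) g = 0"
    for g by (intro anticommutativeD[OF S_anticommutative] star_pair_in_S_set w)
  from this[of "w \<otimes> star w"] have "2 * \<sigma> w = 0"
    using nc wc wn by (simp only: gr_mult_binomials[OF wn wn]) simp
  with double_unit_neq_zero sigma_unit wc show False by blast
qed

lemma symmetric_commutes_or_twists:
  assumes z: "z \<in> carrier G" "star z = z" "2 * (1 - \<sigma> z) = 0"
    and w: "w \<in> carrier G - sym_elts G star"
  shows "z \<otimes> w = w \<otimes> z \<or> z \<otimes> star w = w \<otimes> z"
proof (rule ccontr)
  assume nc: "\<not> ?thesis"
  have wc: "w \<in> carrier G" and wn: "w \<noteq> star w" using w by (auto simp: sym_elts_def)
  have "gr_mult G (double_basis z) (star_pair w) g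
    + gr_mult G (star_pair w) (double_basis z) g = 0" for g
    by (intro anticommutativeD[OF S_anticommutative] double_basis_in_S_set star_pair_in_S_set z w)
  then have vanish: "(if z \<otimes> w = g then 2 else 0) + (if z \<otimes> star w = g then 2 * \<sigma> w else 0)
     + ((if w \<otimes> z = g then 2 else 0) + (if star w \<otimes> z = g then \<sigma> w * 2 else 0)) = (0::'r)" for g
    by (simp only: gr_mult_monomial_binomial[OF wn] gr_mult_binomial_monomial[OF wn])
  have "z \<otimes> w \<noteq> z \<otimes> star w" using z wc wn by simp
  then show False
  proof (cases "star w \<otimes> z = z \<otimes> star w")
    case True
    with vanish[of "z \<otimes> w"] nc \<open>z \<otimes> w \<noteq> z \<otimes> star w\<close> show False
      using two_neq_zero by auto
  next
    case False
    with vanish[of "z \<otimes> star w"] nc \<open>z \<otimes> w \<noteq> z \<otimes> star w\<close> have "2 * \<sigma> w = 0" by auto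
    with double_unit_neq_zero sigma_unit wc show False by blast
  qed
qed

end

locale nonsymmetric_pair = anticommutative_S G star \<sigma>
  for G :: "('a, 'b) monoid_scheme" (structure) and star and \<sigma> :: "'a \<Rightarrow> 'r::comm_ring_1" +
  fixes x y :: 'a
  assumes x_nonsymmetric: "x \<in> carrier G - sym_elts G star"
    and y_nonsymmetric: "y \<in> carrier G - sym_elts G star"
begin

abbreviation "xy \<equiv> x \<otimes> y"
abbreviation "xy' \<equiv> x \<otimes> star y"
abbreviation "x'y \<equiv> star x \<otimes> y"
abbreviation "x'y' \<equiv> star x \<otimes> star y"
abbreviation "yx \<equiv> y \<otimes> x"
abbreviation "yx' \<equiv> y \<otimes> star x"
abbreviation "y'x \<equiv> star y \<otimes> x"
abbreviation "y'x' \<equiv> star y \<otimes> star x"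

lemma x_closed [simp]: "x \<in> carrier G" and y_closed [simp]: "y \<in> carrier G"
  and x_neq_star: "x \<noteq> star x" and y_neq_star: "y \<noteq> star y"
  using x_nonsymmetric y_nonsymmetric by (auto simp: sym_elts_def)

lemma four: "(4::'r) = 0"
  using four_eq_zero x_nonsymmetric .

lemma sigma_x_neq_zero: "\<sigma> x \<noteq> 0" and sigma_y_neq_zero: "\<sigma> y \<noteq> 0"
  and double_sigma_x_neq_zero: "2 * \<sigma> x \<noteq> 0" and double_sigma_y_neq_zero: "2 * \<sigma> y \<noteq> 0"
  using sigma_unit[of x] sigma_unit[of y] double_unit_neq_zero by auto

lemma products_distinct:
  "xy \<noteq> xy'" "xy \<noteq> x'y" "xy' \<noteq> x'y'" "x'y \<noteq> x'y'"
  "yx \<noteq> yx'" "yx \<noteq> y'x" "yx' \<noteq> y'x'" "y'x \<noteq> y'x'"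
  using x_neq_star y_neq_star by simp_all

lemma star_coincidences:
  "xy = yx \<longleftrightarrow> x'y' = y'x'" "xy = x'y' \<longleftrightarrow> yx = y'x'"
  "xy = yx' \<longleftrightarrow> xy' = y'x'" "xy = y'x \<longleftrightarrow> x'y = y'x'"
  "xy' = x'y \<longleftrightarrow> yx' = y'x" "xy' = yx \<longleftrightarrow> x'y' = yx'"
  "xy' = y'x \<longleftrightarrow> x'y = yx'" "x'y = yx \<longleftrightarrow> x'y' = y'x"
  by (subst star_eq_iff[symmetric]; auto)+

lemma anticommutator_vanishes:
  "(if xy = g then 1 else 0) + (if xy' = g then \<sigma> y else 0)
     + (if x'y = g then \<sigma> x else 0) + (if x'y' = g then \<sigma> x * \<sigma> y else 0)
     + (if yx = g then 1 else 0) + (if yx' = g then \<sigma> x else 0)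
     + (if y'x = g then \<sigma> y else 0) + (if y'x' = g then \<sigma> y * \<sigma> x else 0) = 0"
proof -
  have "gr_mult G (star_pair x) (star_pair y) g
    + gr_mult G (star_pair y) (star_pair x) g = 0"
    by (intro anticommutativeD[OF S_anticommutative] star_pair_in_S_set x_nonsymmetric y_nonsymmetric)
  then show ?thesis
    by (simp only: gr_mult_binomials[OF x_neq_star y_neq_star] gr_mult_binomials[OF y_neq_star x_neq_star])
      (simp only: add.assoc)
qed

lemma commuting_case:
  assumes "xy = yx"
  shows "yx = x'y' \<and> x'y' = y'x' \<and> 2 * (1 + \<sigma> x * \<sigma> y) = 0"
proof -
  have "x'y' = y'x'" using assms star_coincidences(1) by simp
  moreover have "xy = x'y'"
  proof (rule ccontr)
    assume "xy \<noteq> x'y'"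
    then have "(2::'r) = 0"
      using anticommutator_vanishes[of xy] assms \<open>x'y' = y'x'\<close> products_distinct by simp
    with two_neq_zero show False ..
  qed
  moreover have "2 * (1 + \<sigma> x * \<sigma> y) = 0"
    using anticommutator_vanishes[of xy] assms calculation products_distinct
    by (simp add: algebra_simps)
  ultimately show ?thesis using assms by simp
qed

lemma commuting_sigma_sum:
  assumes "xy = yx"
  shows "2 * (\<sigma> x + \<sigma> y) = 0"
proof -
  have "x'y' = y'x'" using assms star_coincidences(1) by simp
  then have vanish: "\<sigma> y + (if x'y = xy' then \<sigma> x else 0) + (if yx' = xy' then \<sigma> x else 0)
      + (if y'x = xy' then \<sigma> y else 0) = 0"
    using anticommutator_vanishes[of xy'] assms products_distinct by simp
  have "y'x = xy' \<longleftrightarrow> x'y = yx'" using star_coincidences(7) by auto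
  with vanish sigma_y_neq_zero double_sigma_y_neq_zero
  have "\<sigma> x + \<sigma> y = 0 \<or> 2 * (\<sigma> x + \<sigma> y) = 0"
    by (auto simp: algebra_simps mult_2 split: if_splits)
  then show ?thesis by (metis mult_zero_right)
qed

lemma symmetric_xy_commutes:
  assumes "xy = y'x'" "\<sigma> x * \<sigma> y = -1"
  shows "xy = yx \<or> xy = yx'"
proof -
  have "star xy = xy" using assms(1) by simp
  moreover have "2 * (1 - \<sigma> xy) = 0" using assms(2) four by simp
  ultimately have "xy \<otimes> x = x \<otimes> xy \<or> xy \<otimes> star x = x \<otimes> xy"
    using symmetric_commutes_or_twists x_nonsymmetric by simp
  then show ?thesis by (auto simp: m_assoc)
qed

lemma symmetric_xy'_twists:
  assumes "xy' = yx'" "\<sigma> x = - \<sigma> y"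
  shows "xy' = y'x \<or> xy' = y'x'"
proof -
  have "star xy' = xy'" using assms(1) by simp
  moreover have "2 * (1 - \<sigma> xy') = 0" using assms(2) four sigma_star[of y] by simp
  ultimately have "xy' \<otimes> x = x \<otimes> xy' \<or> xy' \<otimes> star x = x \<otimes> xy'"
    using symmetric_commutes_or_twists x_nonsymmetric by simp
  then show ?thesis by (auto simp: m_assoc)
qed

lemma symmetric_yx_commutes:
  assumes "x'y' = yx" "\<sigma> x * \<sigma> y = -1"
  shows "xy = yx \<or> xy' = yx"
proof -
  have "star yx = yx" using assms(1) by simp
  moreover have "2 * (1 - \<sigma> yx) = 0" using assms(2) four by (simp add: mult.commute)
  ultimately have "yx \<otimes> y = y \<otimes> yx \<or> yx \<otimes> star y = y \<otimes> yx"
    using symmetric_commutes_or_twists y_nonsymmetric by simp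
  then show ?thesis by (auto simp: m_assoc)
qed

lemma xy'_eq_y'x_imp_commute:
  assumes "xy' = y'x" "xy = x'y'"
  shows "xy = yx"
proof -
  have "x \<otimes> xy = (x \<otimes> star x) \<otimes> star y" using assms(2) by (simp add: m_assoc)
  also have "\<dots> = star x \<otimes> xy'"
    using nonsymmetric_commutes_with_star[OF x_nonsymmetric] by (simp add: m_assoc)
  also have "\<dots> = x'y' \<otimes> x" using assms(1) by (simp add: m_assoc)
  also have "\<dots> = x \<otimes> yx" using assms(2)[symmetric] by (simp add: m_assoc)
  finally show ?thesis by simp
qed

lemma xy_neq_y'x':
  assumes "xy \<noteq> yx"
  shows "xy \<noteq> y'x'"
proof
  assume symmetric: "xy = y'x'"
  have "xy \<noteq> x'y'" using symmetric assms star_coincidences(2) by auto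
  then have "1 + \<sigma> y * \<sigma> x = 0"
    using anticommutator_vanishes[of xy] symmetric assms products_distinct by simp
  then have "\<sigma> x * \<sigma> y = -1" by (simp add: mult.commute eq_neg_iff_add_eq_0 add.commute)
  from symmetric_xy_commutes[OF symmetric this] assms symmetric products_distinct show False by auto
qed

lemma yx'_imp_y'x:
  assumes "xy \<noteq> yx" "xy = x'y'" "xy = yx'"
  shows "xy = y'x"
proof (rule ccontr)
  assume "xy \<noteq> y'x"
  have to_yx: "y'x' = yx" "xy' = yx" using assms(2,3) star_coincidences(2,3) by auto
  have "x'y \<noteq> yx" "x'y \<noteq> yx'"
    using assms \<open>xy \<noteq> y'x\<close> star_coincidences(8) products_distinct(2) by auto
  have at_xy: "1 + \<sigma> x * \<sigma> y + \<sigma> x = 0"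
    using anticommutator_vanishes[of xy] assms(1) assms(2,3)[symmetric] \<open>xy \<noteq> y'x\<close>
      xy_neq_y'x'[OF assms(1)] products_distinct
    by simp
  have at_yx: "\<sigma> y + 1 + \<sigma> y * \<sigma> x = 0"
    using anticommutator_vanishes[of yx] assms(1)[symmetric] assms(2)[symmetric] to_yx
      \<open>x'y \<noteq> yx\<close> products_distinct
    by simp
  have "\<sigma> x - \<sigma> y = (1 + \<sigma> x * \<sigma> y + \<sigma> x) - (\<sigma> y + 1 + \<sigma> y * \<sigma> x)"
    by (simp add: algebra_simps)
  then have "\<sigma> x = \<sigma> y" using at_xy at_yx by simp
  moreover have "\<sigma> x + (if y'x = x'y then \<sigma> y else 0) = 0"
    using anticommutator_vanishes[of x'y] \<open>x'y \<noteq> yx\<close> \<open>x'y \<noteq> yx'\<close> assms(2,3)[symmetric]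
      to_yx products_distinct
    by simp
  ultimately show False using sigma_x_neq_zero double_sigma_x_neq_zero by (auto split: if_splits)
qed

lemma y'x_imp_yx':
  assumes "xy \<noteq> yx" "xy = x'y'" "xy = y'x"
  shows "xy = yx'"
proof (rule ccontr)
  assume "xy \<noteq> yx'"
  have to_yx: "y'x' = yx" "x'y = yx" using assms(2,3) star_coincidences(2,4) by auto
  have "xy' \<noteq> yx" "xy' \<noteq> y'x"
    using assms \<open>xy \<noteq> yx'\<close> star_coincidences(6) products_distinct(1) by auto
  have at_xy: "1 + \<sigma> x * \<sigma> y + \<sigma> y = 0"
    using anticommutator_vanishes[of xy] assms(1) assms(2,3)[symmetric] \<open>xy \<noteq> yx'\<close>
      xy_neq_y'x'[OF assms(1)] products_distinct
    by simp
  have at_yx: "\<sigma> x + 1 + \<sigma> y * \<sigma> x = 0"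
    using anticommutator_vanishes[of yx] assms(1)[symmetric] assms(2)[symmetric] to_yx
      \<open>xy' \<noteq> yx\<close> products_distinct
    by simp
  have "\<sigma> y - \<sigma> x = (1 + \<sigma> x * \<sigma> y + \<sigma> y) - (\<sigma> x + 1 + \<sigma> y * \<sigma> x)"
    by (simp add: algebra_simps)
  then have "\<sigma> y = \<sigma> x" using at_xy at_yx by simp
  moreover have "\<sigma> y + (if yx' = xy' then \<sigma> x else 0) = 0"
    using anticommutator_vanishes[of xy'] \<open>xy' \<noteq> yx\<close> \<open>xy' \<noteq> y'x\<close> assms(2,3)[symmetric]
      to_yx products_distinct
    by simp
  ultimately show False using sigma_y_neq_zero double_sigma_y_neq_zero by (auto split: if_splits)
qed

lemma x'y'_yx'_case:
  assumes "xy \<noteq> yx" "xy = x'y'" "xy = yx'" "xy = y'x"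
  shows "1 + \<sigma> x + \<sigma> y + \<sigma> x * \<sigma> y = 0"
proof -
  have "1 + \<sigma> x * \<sigma> y + \<sigma> x + \<sigma> y = 0"
    using anticommutator_vanishes[of xy] assms(1) assms(2-4)[symmetric] xy_neq_y'x'[OF assms(1)]
      products_distinct
    by simp
  then show ?thesis by (simp add: algebra_simps)
qed

lemma x'y'_case:
  assumes "xy \<noteq> yx" "xy = x'y'" "xy \<noteq> yx'" "xy \<noteq> y'x"
  shows "x'y' \<noteq> yx' \<and> yx' = y'x \<and> \<sigma> x * \<sigma> y = -1 \<and> \<sigma> x = - \<sigma> y"
proof -
  have "1 + \<sigma> x * \<sigma> y = 0"
    using anticommutator_vanishes[of xy] assms(1,3,4) assms(2)[symmetric] xy_neq_y'x'[OF assms(1)]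
      products_distinct
    by simp
  then have sigma_xy: "\<sigma> x * \<sigma> y = -1" by (simp add: eq_neg_iff_add_eq_0 add.commute)
  have xy'_neqs: "xy' \<noteq> yx" "xy' \<noteq> y'x'" "xy' \<noteq> y'x"
    using assms star_coincidences(3,6) xy'_eq_y'x_imp_commute by auto
  then have "x'y \<noteq> yx'" using star_coincidences(7) by simp
  have "\<sigma> y + (if x'y = xy' then \<sigma> x else 0) + (if yx' = xy' then \<sigma> x else 0) = 0"
    using anticommutator_vanishes[of xy'] xy'_neqs assms(2)[symmetric] products_distinct
    by simp
  then consider "x'y = xy'" "\<sigma> y + \<sigma> x = 0" | "yx' = xy'" "\<sigma> y + \<sigma> x = 0"
    using \<open>x'y \<noteq> yx'\<close> sigma_y_neq_zero by (auto split: if_splits)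
  then show ?thesis
  proof cases
    case 1
    then have "yx' = y'x" using star_coincidences(5) by auto
    with 1 sigma_xy assms(2,3) show ?thesis by (simp add: eq_neg_iff_add_eq_0 add.commute)
  next
    case 2
    then have "\<sigma> x = - \<sigma> y" by (simp add: eq_neg_iff_add_eq_0 add.commute)
    from symmetric_xy'_twists[OF 2(1)[symmetric] this] xy'_neqs show ?thesis by simp
  qed
qed

lemma twisted_imp_yx':
  assumes "xy \<noteq> yx" "xy \<noteq> x'y'" "\<sigma> y \<noteq> -1"
  shows "xy = yx'"
proof (rule ccontr)
  assume "xy \<noteq> yx'"
  then have "1 + (if y'x = xy then \<sigma> y else 0) = 0"
    using anticommutator_vanishes[of xy] assms(1,2) xy_neq_y'x'[OF assms(1)] products_distinct
    by simp
  with assms(3) show False by (auto simp: eq_neg_iff_add_eq_0 add.commute split: if_splits)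
qed

lemma twisted_not_y'x:
  assumes "xy \<noteq> yx" "xy \<noteq> x'y'" "xy = yx'"
  shows "xy \<noteq> y'x"
proof
  assume "xy = y'x"
  have to_y'x': "xy' = y'x'" "x'y = y'x'" using assms(3) \<open>xy = y'x\<close> star_coincidences(3,4) by auto
  have y'x'_neqs: "y'x' \<noteq> x'y'" "y'x' \<noteq> yx" "y'x' \<noteq> xy"
    using assms(1,2) star_coincidences(1,2) xy_neq_y'x'[OF assms(1)] by auto
  have at_xy: "1 + \<sigma> x + \<sigma> y = 0"
    using anticommutator_vanishes[of xy] assms(1,2) assms(3)[symmetric] \<open>xy = y'x\<close>[symmetric]
      y'x'_neqs products_distinct
    by simp
  have at_y'x': "\<sigma> y + \<sigma> x + \<sigma> y * \<sigma> x = 0"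
    using anticommutator_vanishes[of y'x'] to_y'x' y'x'_neqs assms(3)[symmetric]
      \<open>xy = y'x\<close>[symmetric]
    by simp
  have "\<sigma> x * \<sigma> y - 1 = (\<sigma> y + \<sigma> x + \<sigma> y * \<sigma> x) - (1 + \<sigma> x + \<sigma> y)"
    by (simp add: algebra_simps)
  then have "\<sigma> x * \<sigma> y = 1" using at_xy at_y'x' by simp
  moreover have "\<sigma> x * \<sigma> y + (if yx = x'y' then 1 else 0) = 0"
    using anticommutator_vanishes[of x'y'] to_y'x' y'x'_neqs assms(2,3)[symmetric]
      \<open>xy = y'x\<close>[symmetric] products_distinct
    by simp
  ultimately show False using two_neq_zero by (auto split: if_splits)
qed

lemma twisted_case:
  assumes "xy \<noteq> yx" "xy \<noteq> x'y'" "xy = yx'" "xy \<noteq> y'x"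
  shows "x'y' = y'x \<and> \<sigma> x = -1"
proof -
  have "1 + \<sigma> x = 0"
    using anticommutator_vanishes[of xy] assms(1,2,4) assms(3)[symmetric] xy_neq_y'x'[OF assms(1)]
      products_distinct
    by simp
  then have sigma_x: "\<sigma> x = -1" by (simp add: eq_neg_iff_add_eq_0 add.commute)
  have "xy' = y'x'" using assms(3) star_coincidences(3) by simp
  have "x'y' \<noteq> yx"
  proof
    assume "x'y' = yx"
    moreover have "\<sigma> x * \<sigma> y + 1 = 0"
      using anticommutator_vanishes[of x'y'] \<open>x'y' = yx\<close>[symmetric] \<open>xy' = y'x'\<close>
        assms(3)[symmetric] products_distinct
      by simp
    ultimately have "xy = yx \<or> xy' = yx"
      using symmetric_yx_commutes by (simp add: eq_neg_iff_add_eq_0 add.commute)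
    with assms(1,2) \<open>xy' = y'x'\<close> star_coincidences(2) show False by auto
  qed
  then have "\<sigma> x * \<sigma> y + (if y'x = x'y' then \<sigma> y else 0) = 0"
    using anticommutator_vanishes[of x'y'] \<open>xy' = y'x'\<close> assms(2) assms(3)[symmetric]
      products_distinct
    by simp
  with sigma_x sigma_y_neq_zero show ?thesis by (auto split: if_splits)
qed

lemma four_cases:
  assumes "\<sigma> y \<noteq> -1"
  shows "(xy = yx \<and> yx = x'y' \<and> x'y' = y'x' \<and> 2 * (1 + \<sigma> xy) = 0 \<and> 2 * (\<sigma> x + \<sigma> y) = 0)
       \<or> (xy = yx' \<and> yx' = y'x \<and> y'x = x'y' \<and> 1 + \<sigma> x + \<sigma> y + \<sigma> xy = 0)
       \<or> (xy = x'y' \<and> x'y' \<noteq> yx' \<and> yx' = y'x \<and> \<sigma> xy = -1 \<and> \<sigma> x = - \<sigma> y)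
       \<or> (xy = yx' \<and> yx' \<noteq> x'y' \<and> x'y' = y'x \<and> \<sigma> x = -1)"
proof -
  have sigma_xy: "\<sigma> xy = \<sigma> x * \<sigma> y" by simp
  consider "xy = yx" | "xy \<noteq> yx" "xy = x'y'" "xy = yx'" "xy = y'x"
    | "xy \<noteq> yx" "xy = x'y'" "xy \<noteq> yx'" "xy \<noteq> y'x" | "xy \<noteq> yx" "xy \<noteq> x'y'"
    using yx'_imp_y'x y'x_imp_yx' by blast
  then show ?thesis
  proof cases
    case 1
    with commuting_case commuting_sigma_sum sigma_xy show ?thesis by metis
  next
    case 2
    with x'y'_yx'_case sigma_xy show ?thesis by metis
  next
    case 3
    with x'y'_case sigma_xy show ?thesis by metis
  next
    case 4
    then have "xy = yx'" "xy \<noteq> y'x" using twisted_imp_yx' twisted_not_y'x assms by blast+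
    with 4 twisted_case show ?thesis by metis
  qed
qed

end

theorem lemma3p6:
  fixes G :: "('g, 'b) monoid_scheme" and star :: "'g \<Rightarrow> 'g"
    and \<sigma> :: "'g \<Rightarrow> 'r::comm_ring_1" and x y :: 'g
  assumes "group G"
    and "CHAR('r) \<noteq> 2"
    and "group_involution G star"
    and "unit_hom G \<sigma>"
    and "\<exists>z \<in> carrier G. \<sigma> z \<noteq> 1"
    and "\<forall>z \<in> carrier G. \<sigma> (z \<otimes>\<^bsub>G\<^esub> star z) = 1"
    and "anticommutative G (S_set G star \<sigma>)"
    and "x \<in> carrier G - sym_elts G star" and "y \<in> carrier G - sym_elts G star"
    and "\<sigma> y \<noteq> -1"
  shows "(x \<otimes>\<^bsub>G\<^esub> y = y \<otimes>\<^bsub>G\<^esub> x \<and> y \<otimes>\<^bsub>G\<^esub> x = star x \<otimes>\<^bsub>G\<^esub> star y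
          \<and> star x \<otimes>\<^bsub>G\<^esub> star y = star y \<otimes>\<^bsub>G\<^esub> star x
          \<and> 2 * (1 + \<sigma> (x \<otimes>\<^bsub>G\<^esub> y)) = 0 \<and> 2 * (\<sigma> x + \<sigma> y) = 0)
       \<or> (x \<otimes>\<^bsub>G\<^esub> y = y \<otimes>\<^bsub>G\<^esub> star x \<and> y \<otimes>\<^bsub>G\<^esub> star x = star y \<otimes>\<^bsub>G\<^esub> x
          \<and> star y \<otimes>\<^bsub>G\<^esub> x = star x \<otimes>\<^bsub>G\<^esub> star y
          \<and> 1 + \<sigma> x + \<sigma> y + \<sigma> (x \<otimes>\<^bsub>G\<^esub> y) = 0)
       \<or> (x \<otimes>\<^bsub>G\<^esub> y = star x \<otimes>\<^bsub>G\<^esub> star y \<and> star x \<otimes>\<^bsub>G\<^esub> star y \<noteq> y \<otimes>\<^bsub>G\<^esub> star x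
          \<and> y \<otimes>\<^bsub>G\<^esub> star x = star y \<otimes>\<^bsub>G\<^esub> x
          \<and> \<sigma> (x \<otimes>\<^bsub>G\<^esub> y) = -1 \<and> \<sigma> x = - \<sigma> y)
       \<or> (x \<otimes>\<^bsub>G\<^esub> y = y \<otimes>\<^bsub>G\<^esub> star x \<and> y \<otimes>\<^bsub>G\<^esub> star x \<noteq> star x \<otimes>\<^bsub>G\<^esub> star y
          \<and> star x \<otimes>\<^bsub>G\<^esub> star y = star y \<otimes>\<^bsub>G\<^esub> x
          \<and> \<sigma> x = -1)"
proof -
  have "nonsymmetric_pair G star \<sigma> x y"
    using assms by (simp add: nonsymmetric_pair_def nonsymmetric_pair_axioms_def
        anticommutative_S_def anticommutative_S_axioms_def)
  then show ?thesis using assms(10) by (rule nonsymmetric_pair.four_cases)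
qed

end
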